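(* Let $\beta,p,n$ be positive integers and $\mathcal{S}=\mathcal{S}_n(\beta,p)$. If $G_1,\ldots,G_M$ are pairwise disjoint $\mathcal{S}$-good subsets of $V_n$, then there exists a $(1,\beta,p)$-constrained code on $n$ cells of size $M$. In particular, if $G$ is an $\mathcal{S}$-good $(n,k)$ binary linear code, then there exists a $(1,\beta,p)$-constrained code with rate $\frac{n-k}{n}$.
   Context: $V_n=\{0,1\}^n$ with componentwise addition mod 2. A binary vector is $(\beta,p)$-window-weight-limited if every $\beta$ consecutive entries contain at most $p$ ones; $\mathcal{S}_n(\beta,p)$ is the set of such vectors of length $n$. For $B_1,B_2\subseteq V_n$, $B_1+B_2=\{\mathbf{b}_1+\mathbf{b}_2:\mathbf{b}_1\in B_1,\mathbf{b}_2\in B_2\}$. A subset $B\subseteq V_n$ is $\mathcal{S}$-good if $\mathcal{S}+B=V_n$. An $(n,k)$ linear code is a $k$-dimensional subspace of $V_n$. A code on $n$ binary cells consists, for each write $i\ge1$, of an encoder $\mathcal{E}_i:\{1,\ldots,M_i\}\times\{0,1\}^n\to\{0,1\}^n$ and decoder $\mathcal{D}_i:\{0,1\}^n\to\{1,\ldots,M_i\}$ with $\mathcal{D}_i(\mathcal{E}_i(m,\mathbf{u}))=m$ (the decoder sees only the new state); it has size $M$ if $M_i=M$ for all $i$, in which case its rate is $\frac{\log_2M}{n}$. Starting from the zero state, messages produce states $\mathbf{v}_i=\mathcal{E}_i(m_i,\mathbf{v}_{i-1})$; the code is $(1,\beta,p)$-constrained if for every message sequence and every $i\ge0$, $\mathbf{v}_i+\mathbf{v}_{i+1}$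 has at most $p$ ones in every $\beta$ consecutive positions. *)

theory Defs
  imports Complex_Main "HOL-Library.Z2" "HOL-Library.Function_Algebras"
begin

text \<open>Binary vectors of length n: functions nat => bit vanishing from position n on
  (positions 0..n-1). Addition is pointwise addition in GF(2).\<close>

definition Vn :: "nat \<Rightarrow> (nat \<Rightarrow> bit) set" where
  "Vn n = {v. \<forall>i\<ge>n. v i = 0}"

definition window_weight_limited :: "nat \<Rightarrow> nat \<Rightarrow> nat \<Rightarrow> (nat \<Rightarrow> bit) \<Rightarrow> bool" where
  "window_weight_limited n \<beta> p v \<longleftrightarrow>
     v \<in> Vn n \<and> (\<forall>i. i + \<beta> \<le> n \<longrightarrow> card {j. i \<le> j \<and> j < i + \<beta> \<and> v j = 1} \<le> p)"

definition Sset :: "nat \<Rightarrow> nat \<Rightarrow> nat \<Rightarrow> (nat \<Rightarrow> bit) set" where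
  "Sset n \<beta> p = {v. window_weight_limited n \<beta> p v}"

definition setplus :: "(nat \<Rightarrow> bit) set \<Rightarrow> (nat \<Rightarrow> bit) set \<Rightarrow> (nat \<Rightarrow> bit) set" where
  "setplus A B = {a + b | a b. a \<in> A \<and> b \<in> B}"

definition S_good :: "nat \<Rightarrow> nat \<Rightarrow> nat \<Rightarrow> (nat \<Rightarrow> bit) set \<Rightarrow> bool" where
  "S_good n \<beta> p B \<longleftrightarrow> B \<subseteq> Vn n \<and> setplus (Sset n \<beta> p) B = Vn n"

definition linear_code :: "nat \<Rightarrow> nat \<Rightarrow> (nat \<Rightarrow> bit) set \<Rightarrow> bool" where
  "linear_code n k C \<longleftrightarrow>
     C \<subseteq> Vn n \<and> 0 \<in> C \<and> (\<forall>x\<in>C. \<forall>y\<in>C. x + y \<in> C) \<and>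
     (\<exists>B. B \<subseteq> C \<and> finite B \<and> card B = k \<and>
        (\<forall>c :: (nat \<Rightarrow> bit) \<Rightarrow> bit.
            (\<forall>i. (\<Sum>b\<in>B. c b * b i) = 0) \<longrightarrow> (\<forall>b\<in>B. c b = 0)) \<and>
        C = {(\<lambda>i. \<Sum>b\<in>B. c b * b i) | c. True})"

definition is_code :: "nat \<Rightarrow> nat \<Rightarrow> (nat \<Rightarrow> nat \<Rightarrow> (nat \<Rightarrow> bit) \<Rightarrow> (nat \<Rightarrow> bit))
                        \<Rightarrow> (nat \<Rightarrow> (nat \<Rightarrow> bit) \<Rightarrow> nat) \<Rightarrow> bool" where
  "is_code n M E D \<longleftrightarrow>
     (\<forall>i\<ge>1. \<forall>m\<in>{1..M}. \<forall>u\<in>Vn n. E i m u \<in> Vn n \<and> D i (E i m u) = m) \<and>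
     (\<forall>i\<ge>1. \<forall>v\<in>Vn n. D i v \<in> {1..M})"

primrec state :: "(nat \<Rightarrow> nat \<Rightarrow> (nat \<Rightarrow> bit) \<Rightarrow> (nat \<Rightarrow> bit)) \<Rightarrow> (nat \<Rightarrow> nat) \<Rightarrow> nat \<Rightarrow> (nat \<Rightarrow> bit)" where
  "state E ms 0 = 0"
| "state E ms (Suc i) = E (Suc i) (ms (Suc i)) (state E ms i)"

definition constrained :: "nat \<Rightarrow> nat \<Rightarrow> nat \<Rightarrow> nat \<Rightarrow> (nat \<Rightarrow> nat \<Rightarrow> (nat \<Rightarrow> bit) \<Rightarrow> (nat \<Rightarrow> bit)) \<Rightarrow> bool" where
  "constrained n \<beta> p M E \<longleftrightarrow>
     (\<forall>ms. (\<forall>i\<ge>1. ms i \<in> {1..M}) \<longrightarrow>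
        (\<forall>i. window_weight_limited n \<beta> p (state E ms i + state E ms (Suc i))))"

end

theory Submission
  imports Defs "HOL-Library.FuncSet" "HOL-Library.Set_Algebras"
begin

text \<open>A write of message m moves the current state u to u + s, where s is a
  window-weight-limited vector chosen so that u + s lies in G_m; such an s exists because
  S + G_m = V_n, and the decoder recovers m as the index of the unique G_m containing the
  new state. Consecutive states then differ by s, so the code is constrained.
  If C is an S-good (n,k) linear code, every coset v + C is S-good, since
  S + (v + C) = v + V_n = V_n, and the 2^(n-k) distinct cosets are pairwise disjoint,
  which gives a code of size 2^(n-k).\<close>

lemma elt_set_plus_subgroup:
  fixes C :: "'a::ab_group_add set"
  assumes sub: "\<And>x y. x \<in> C \<Longrightarrow> y \<in> C \<Longrightarrow> x - y \<in> C" and "c \<in> C"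
  shows "c +o C = C"
proof
  have neg: "- y \<in> C" if "y \<in> C" for y
    using sub[OF sub[OF \<open>c \<in> C\<close> \<open>c \<in> C\<close>] that] by simp
  show "c +o C \<subseteq> C"
    using sub[OF \<open>c \<in> C\<close> neg] by (auto simp: elt_set_plus_def)
  show "C \<subseteq> c +o C"
    using sub[OF _ \<open>c \<in> C\<close>] by (auto simp: set_minus_plus[symmetric])
qed

lemma elt_set_plus_eq_if_mem:
  fixes C :: "'a::ab_group_add set"
  assumes sub: "\<And>x y. x \<in> C \<Longrightarrow> y \<in> C \<Longrightarrow> x - y \<in> C" and "w \<in> v +o C"
  shows "w +o C = v +o C"
proof -
  have "w - v \<in> C" using assms(2) by (rule set_plus_imp_minus)
  have "w +o C = v +o ((w - v) +o C)"
    by (simp add: set_plus_rearrange2)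
  also have "\<dots> = v +o C"
    using elt_set_plus_subgroup[OF sub \<open>w - v \<in> C\<close>] by simp
  finally show ?thesis .
qed

lemma elt_set_plus_disjoint_if_neq:
  fixes C :: "'a::ab_group_add set"
  assumes "\<And>x y. x \<in> C \<Longrightarrow> y \<in> C \<Longrightarrow> x - y \<in> C" and "v +o C \<noteq> w +o C"
  shows "(v +o C) \<inter> (w +o C) = {}"
proof (rule ccontr)
  assume "(v +o C) \<inter> (w +o C) \<noteq> {}"
  then obtain x where "x \<in> v +o C" and "x \<in> w +o C" by blast
  then have "v +o C = w +o C"
    using elt_set_plus_eq_if_mem[OF assms(1)] by metis
  with assms(2) show False by contradiction
qed

lemma card_elt_set_plus:
  fixes C :: "'a::ab_group_add set"
  shows "card (v +o C) = card C"
proof -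
  have "v +o C = (+) v ` C" by (auto simp: elt_set_plus_def)
  then show ?thesis by (simp add: card_image)
qed

lemma card_eq_card_mult_card_cosets:
  fixes C V :: "'a::ab_group_add set"
  assumes "finite V" and sub: "\<And>x y. x \<in> C \<Longrightarrow> y \<in> C \<Longrightarrow> x - y \<in> C" and "0 \<in> C"
    and cosets_in: "\<And>v. v \<in> V \<Longrightarrow> v +o C \<subseteq> V"
  shows "card V = card C * card ((\<lambda>v. v +o C) ` V)"
proof -
  let ?Q = "(\<lambda>v. v +o C) ` V"
  have "\<Union>?Q = V"
  proof
    show "\<Union>?Q \<subseteq> V" using cosets_in by blast
    show "V \<subseteq> \<Union>?Q" using set_plus_intro2[OF \<open>0 \<in> C\<close>] by fastforce
  qed
  moreover have "card C * card ?Q = card (\<Union>?Q)"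
  proof (rule card_partition)
    show "c1 \<inter> c2 = {}" if "c1 \<in> ?Q" "c2 \<in> ?Q" "c1 \<noteq> c2" for c1 c2
      using that elt_set_plus_disjoint_if_neq[OF sub] by blast
  qed (use \<open>finite V\<close> \<open>\<Union>?Q = V\<close> card_elt_set_plus in auto)
  ultimately show ?thesis by simp
qed

lemma add_eq_0_iff_bit: "(x :: bit) + y = 0 \<longleftrightarrow> x = y"
  by (metis eq_neg_iff_add_eq_0 id_apply uminus_bit_def)

lemma uminus_bit_fun [simp]: "- (u :: nat \<Rightarrow> bit) = u"
  by (rule ext) simp

lemma add_self_bit_fun [simp]: "(u :: nat \<Rightarrow> bit) + u = 0"
  using left_minus[of u] by simp

lemma add_cancel_left_bit_fun [simp]: "(u :: nat \<Rightarrow> bit) + (u + v) = v"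
  by (simp flip: add.assoc)

lemma diff_eq_add_bit_fun: "(u :: nat \<Rightarrow> bit) - v = u + v"
  by simp

lemma Vn_diff: "u \<in> Vn n \<Longrightarrow> v \<in> Vn n \<Longrightarrow> u - v \<in> Vn n"
  by (simp add: Vn_def)

lemma setplus_eq_set_plus: "setplus A B = A + B"
  by (auto simp: setplus_def set_plus_def)

lemma UNIV_bit: "(UNIV :: bit set) = {0, 1}"
  by (auto intro: bit.exhaust)

lemma card_UNIV_bit: "card (UNIV :: bit set) = 2"
  by (simp add: UNIV_bit)

lemma card_Vn: "finite (Vn n)" "card (Vn n) = 2 ^ n"
proof -
  have "bij_betw (\<lambda>v. restrict v {..<n}) (Vn n) ({..<n} \<rightarrow>\<^sub>E (UNIV :: bit set))"
  proof (rule bij_betwI[where g = "\<lambda>f i. if i < n then f i else 0"])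
    show "(\<lambda>i. if i < n then restrict v {..<n} i else 0) = v" if "v \<in> Vn n" for v
      using that by (auto simp: Vn_def)
    show "restrict (\<lambda>i. if i < n then f i else 0) {..<n} = f" if "f \<in> {..<n} \<rightarrow>\<^sub>E UNIV" for f
      using that by (auto simp: PiE_def extensional_def)
  qed (auto simp: Vn_def)
  moreover have "finite ({..<n} \<rightarrow>\<^sub>E (UNIV :: bit set))"
    by (simp add: finite_PiE UNIV_bit)
  moreover have "card ({..<n} \<rightarrow>\<^sub>E (UNIV :: bit set)) = 2 ^ n"
    by (simp add: card_PiE card_UNIV_bit)
  ultimately show "finite (Vn n)" "card (Vn n) = 2 ^ n"
    by (metis bij_betw_finite bij_betw_same_card)+
qed

lemma card_linear_code:
  assumes "linear_code n k C"
  shows "card C = 2 ^ k"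
proof -
  obtain B where "finite B" "card B = k"
    and indep: "\<And>c :: (nat \<Rightarrow> bit) \<Rightarrow> bit. (\<forall>i. (\<Sum>b\<in>B. c b * b i) = 0) \<Longrightarrow> \<forall>b\<in>B. c b = 0"
    and span: "C = {(\<lambda>i. \<Sum>b\<in>B. c b * b i) | c. True}"
    using assms unfolding linear_code_def by blast
  define comb where "comb c = (\<lambda>i. \<Sum>b\<in>B. c b * b i)" for c :: "(nat \<Rightarrow> bit) \<Rightarrow> bit"
  have comb_restrict: "comb (restrict c B) = comb c" for c
    unfolding comb_def by (intro ext sum.cong) auto
  have "comb ` (B \<rightarrow>\<^sub>E UNIV) = C"
  proof
    show "comb ` (B \<rightarrow>\<^sub>E UNIV) \<subseteq> C"
      unfolding span comb_def by blast
    show "C \<subseteq> comb ` (B \<rightarrow>\<^sub>E UNIV)"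
    proof
      fix x assume "x \<in> C"
      then obtain c where "x = comb (restrict c B)"
        unfolding span comb_def[symmetric] comb_restrict by blast
      then show "x \<in> comb ` (B \<rightarrow>\<^sub>E UNIV)" by simp
    qed
  qed
  moreover have "inj_on comb (B \<rightarrow>\<^sub>E UNIV)"
  proof
    fix c c' assume c: "c \<in> B \<rightarrow>\<^sub>E UNIV" and c': "c' \<in> B \<rightarrow>\<^sub>E UNIV" and "comb c = comb c'"
    have "(\<Sum>b\<in>B. (c b + c' b) * b i) = 0" for i
    proof -
      have "(\<Sum>b\<in>B. (c b + c' b) * b i) = comb c i + comb c' i"
        unfolding comb_def by (simp only: distrib_right sum.distrib)
      also have "\<dots> = 0"
        using \<open>comb c = comb c'\<close> by (simp only: add_eq_0_iff_bit)
      finally show ?thesis .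
    qed
    then have "c b = c' b" if "b \<in> B" for b
      using indep[of "\<lambda>b. c b + c' b"] that add_eq_0_iff_bit by blast
    then show "c = c'"
      using c c' by (intro PiE_ext) auto
  qed
  ultimately have "card C = card (B \<rightarrow>\<^sub>E (UNIV :: bit set))"
    by (metis card_image)
  then show ?thesis
    using \<open>finite B\<close> \<open>card B = k\<close> by (simp add: card_PiE card_UNIV_bit)
qed

lemma S_good_elt_set_plus:
  assumes "S_good n \<beta> p C" and "v \<in> Vn n"
  shows "S_good n \<beta> p (v +o C)"
proof -
  have Vn_shift: "v +o Vn n = Vn n"
    using elt_set_plus_subgroup[OF Vn_diff \<open>v \<in> Vn n\<close>] .
  have "C \<subseteq> Vn n" and "Sset n \<beta> p + C = Vn n"
    using assms(1) by (simp_all add: S_good_def setplus_eq_set_plus)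
  then have "v +o C \<subseteq> Vn n" and "Sset n \<beta> p + (v +o C) = Vn n"
    using set_plus_mono[of C "Vn n" v] Vn_shift by (auto simp: set_plus_rearrange4)
  then show ?thesis by (simp add: S_good_def setplus_eq_set_plus)
qed

lemma eq_power2_diff_if_power2_eq_mult:
  fixes q :: nat
  assumes "2 ^ n = 2 ^ k * q"
  shows "q = 2 ^ (n - k)"
proof -
  have "k \<le> n"
  proof (rule ccontr)
    assume "\<not> k \<le> n"
    then have "(2::nat) ^ n < 2 ^ k" by simp
    with assms show False by (cases q) auto
  qed
  with assms have "2 ^ k * q = 2 ^ k * 2 ^ (n - k)" by (simp flip: power_add)
  then show ?thesis by simp
qed

lemma disjoint_S_good_cosets_of_linear_code:
  assumes "linear_code n k C" and "S_good n \<beta> p C"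
  obtains G :: "nat \<Rightarrow> (nat \<Rightarrow> bit) set"
  where "\<forall>i\<in>{1..2 ^ (n - k)}. S_good n \<beta> p (G i)"
    and "\<forall>i\<in>{1..2 ^ (n - k)}. \<forall>j\<in>{1..2 ^ (n - k)}. i \<noteq> j \<longrightarrow> G i \<inter> G j = {}"
proof -
  have "0 \<in> C" and "\<forall>x\<in>C. \<forall>y\<in>C. x + y \<in> C"
    using assms(1) unfolding linear_code_def by blast+
  then have sub: "\<And>x y. x \<in> C \<Longrightarrow> y \<in> C \<Longrightarrow> x - y \<in> C"
    by (simp add: diff_eq_add_bit_fun)
  define Q where "Q = (\<lambda>v. v +o C) ` Vn n"
  have "card (Vn n) = card C * card Q"
    unfolding Q_def
  proof (rule card_eq_card_mult_card_cosets[OF card_Vn(1) sub \<open>0 \<in> C\<close>])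
    show "v +o C \<subseteq> Vn n" if "v \<in> Vn n" for v
      using S_good_elt_set_plus[OF assms(2) that] by (simp add: S_good_def)
  qed
  then have "card Q = 2 ^ (n - k)"
    by (intro eq_power2_diff_if_power2_eq_mult) (simp add: card_Vn card_linear_code[OF assms(1)])
  moreover have "finite Q" unfolding Q_def using card_Vn(1) by simp
  ultimately obtain h where h: "bij_betw h {1..2 ^ (n - k) :: nat} Q"
    by (metis ex_bij_betw_nat_finite_1)
  have h_coset: "\<exists>v\<in>Vn n. h i = v +o C" if "i \<in> {1..2 ^ (n - k)}" for i :: nat
    using bij_betwE[OF h] that unfolding Q_def by blast
  show thesis
  proof
    show "\<forall>i\<in>{1..2 ^ (n - k)}. S_good n \<beta> p (h i)"
      using h_coset S_good_elt_set_plus[OF assms(2)] by fastforce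
    show "\<forall>i\<in>{1..2 ^ (n - k)}. \<forall>j\<in>{1..2 ^ (n - k)}. i \<noteq> j \<longrightarrow> h i \<inter> h j = {}"
    proof (intro ballI impI)
      fix i j :: nat assume ij: "i \<in> {1..2 ^ (n - k)}" "j \<in> {1..2 ^ (n - k)}" "i \<noteq> j"
      then have "h i \<noteq> h j" using h by (auto simp: bij_betw_def inj_on_def)
      moreover obtain v w where "h i = v +o C" "h j = w +o C"
        using h_coset[OF ij(1)] h_coset[OF ij(2)] by blast
      ultimately show "h i \<inter> h j = {}"
        using elt_set_plus_disjoint_if_neq[OF sub] by simp
    qed
  qed
qed

definition good_shift :: "nat \<Rightarrow> nat \<Rightarrow> nat \<Rightarrow> (nat \<Rightarrow> bit) set \<Rightarrow> (nat \<Rightarrow> bit) \<Rightarrow> nat \<Rightarrow> bit"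
  where "good_shift n \<beta> p G u = (SOME s. s \<in> Sset n \<beta> p \<and> u + s \<in> G)"

lemma good_shift:
  assumes "S_good n \<beta> p G" and "u \<in> Vn n"
  shows "good_shift n \<beta> p G u \<in> Sset n \<beta> p" and "u + good_shift n \<beta> p G u \<in> G"
proof -
  have "u \<in> Sset n \<beta> p + G"
    using assms by (simp add: S_good_def setplus_eq_set_plus)
  then obtain s g where "s \<in> Sset n \<beta> p" "g \<in> G" "u = s + g"
    by (rule set_plus_elim)
  then have "\<exists>s. s \<in> Sset n \<beta> p \<and> u + s \<in> G"
    by (metis add.commute add_cancel_left_bit_fun)
  then show "good_shift n \<beta> p G u \<in> Sset n \<beta> p" "u + good_shift n \<beta> p G u \<in> G"
    unfolding good_shift_def by (metis (mono_tags, lifting) someI_ex)+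
qed

definition shift_encoder ::
  "nat \<Rightarrow> nat \<Rightarrow> nat \<Rightarrow> (nat \<Rightarrow> (nat \<Rightarrow> bit) set) \<Rightarrow> nat \<Rightarrow> nat \<Rightarrow> (nat \<Rightarrow> bit) \<Rightarrow> nat \<Rightarrow> bit"
  where "shift_encoder n \<beta> p G i m u = u + good_shift n \<beta> p (G m) u"

definition index_decoder :: "nat \<Rightarrow> (nat \<Rightarrow> (nat \<Rightarrow> bit) set) \<Rightarrow> nat \<Rightarrow> (nat \<Rightarrow> bit) \<Rightarrow> nat"
  where "index_decoder M G i v =
    (if \<exists>m\<in>{1..M}. v \<in> G m then THE m. m \<in> {1..M} \<and> v \<in> G m else 1)"

lemma index_decoder_eq:
  assumes disj: "\<forall>i\<in>{1..M}. \<forall>j\<in>{1..M}. i \<noteq> j \<longrightarrow> G i \<inter> G j = {}"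
    and "m \<in> {1..M}" and "v \<in> G m"
  shows "index_decoder M G i v = m"
proof -
  have "(THE m. m \<in> {1..M} \<and> v \<in> G m) = m"
    by (rule the_equality) (use assms in blast)+
  then show ?thesis using assms(2,3) by (auto simp: index_decoder_def)
qed

lemma is_code_shift_encoder:
  assumes "0 < M" and good: "\<forall>m\<in>{1..M}. S_good n \<beta> p (G m)"
    and disj: "\<forall>i\<in>{1..M}. \<forall>j\<in>{1..M}. i \<noteq> j \<longrightarrow> G i \<inter> G j = {}"
  shows "is_code n M (shift_encoder n \<beta> p G) (index_decoder M G)"
  unfolding is_code_def
proof (intro conjI allI impI ballI)
  fix i m u assume "m \<in> {1..M}" and "u \<in> Vn n"
  then have "shift_encoder n \<beta> p G i m u \<in> G m"
    using good good_shift(2) by (simp add: shift_encoder_def)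
  then show "shift_encoder n \<beta> p G i m u \<in> Vn n"
    and "index_decoder M G i (shift_encoder n \<beta> p G i m u) = m"
    using good \<open>m \<in> {1..M}\<close> index_decoder_eq[OF disj] by (auto simp: S_good_def)
next
  fix i v
  show "index_decoder M G i v \<in> {1..M}"
  proof (cases "\<exists>m\<in>{1..M}. v \<in> G m")
    case True
    then obtain m where "m \<in> {1..M}" "v \<in> G m" by blast
    then show ?thesis using index_decoder_eq[OF disj] by simp
  next
    case False
    then show ?thesis using \<open>0 < M\<close> by (simp add: index_decoder_def)
  qed
qed

lemma state_in_Vn:
  assumes "\<And>i m u. 1 \<le> i \<Longrightarrow> m \<in> {1..M} \<Longrightarrow> u \<in> Vn n \<Longrightarrow> E i m u \<in> Vn n"
    and "\<forall>i\<ge>1. ms i \<in> {1..M}"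
  shows "state E ms j \<in> Vn n"
proof (induction j)
  case 0
  show ?case by (simp add: Vn_def)
next
  case (Suc j)
  show ?case
    unfolding state.simps by (rule assms(1)) (use Suc.IH assms(2) in auto)
qed

lemma constrained_shift_encoder:
  assumes good: "\<forall>m\<in>{1..M}. S_good n \<beta> p (G m)"
  shows "constrained n \<beta> p M (shift_encoder n \<beta> p G)"
  unfolding constrained_def
proof (intro allI impI)
  fix ms :: "nat \<Rightarrow> nat" and i :: nat
  assume ms: "\<forall>i\<ge>1. ms i \<in> {1..M}"
  let ?E = "shift_encoder n \<beta> p G"
  have "?E j m u \<in> Vn n" if "m \<in> {1..M}" "u \<in> Vn n" for j m u
    using that good good_shift(2)[of n \<beta> p "G m" u] by (auto simp: shift_encoder_def S_good_def)
  then have "state ?E ms i \<in> Vn n"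
    by (rule state_in_Vn) (use ms in auto)
  moreover have "ms (Suc i) \<in> {1..M}" using ms by simp
  ultimately have "good_shift n \<beta> p (G (ms (Suc i))) (state ?E ms i) \<in> Sset n \<beta> p"
    using good good_shift(1) by blast
  moreover have "state ?E ms (Suc i) = state ?E ms i + good_shift n \<beta> p (G (ms (Suc i))) (state ?E ms i)"
    unfolding state.simps shift_encoder_def ..
  ultimately show "window_weight_limited n \<beta> p (state ?E ms i + state ?E ms (Suc i))"
    by (simp only: add_cancel_left_bit_fun Sset_def mem_Collect_eq)
qed

theorem constrained_code_if_disjoint_S_good:
  assumes "0 < M" and "\<forall>m\<in>{1..M}. S_good n \<beta> p (G m)"
    and "\<forall>i\<in>{1..M}. \<forall>j\<in>{1..M}. i \<noteq> j \<longrightarrow> G i \<inter> G j = {}"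
  shows "\<exists>E D. is_code n M E D \<and> constrained n \<beta> p M E"
  using is_code_shift_encoder[OF assms] constrained_shift_encoder[OF assms(2)] by blast

lemma constrained_code_of_linear_code:
  assumes "linear_code n k C" and "S_good n \<beta> p C"
  shows "\<exists>E D. is_code n (2 ^ (n - k)) E D \<and> constrained n \<beta> p (2 ^ (n - k)) E"
proof -
  obtain G :: "nat \<Rightarrow> (nat \<Rightarrow> bit) set"
    where "\<forall>i\<in>{1..2 ^ (n - k)}. S_good n \<beta> p (G i)"
      and "\<forall>i\<in>{1..2 ^ (n - k)}. \<forall>j\<in>{1..2 ^ (n - k)}. i \<noteq> j \<longrightarrow> G i \<inter> G j = {}"
    using disjoint_S_good_cosets_of_linear_code[OF assms] .
  then show ?thesis
    by (intro constrained_code_if_disjoint_S_good) simp_all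
qed

theorem lemma5:
  fixes \<beta> p n :: nat
  assumes "0 < \<beta>" and "0 < p" and "0 < n"
  shows "(\<forall>(M::nat) (G :: nat \<Rightarrow> (nat \<Rightarrow> bit) set).
            0 < M \<and> (\<forall>i\<in>{1..M}. S_good n \<beta> p (G i)) \<and>
            (\<forall>i\<in>{1..M}. \<forall>j\<in>{1..M}. i \<noteq> j \<longrightarrow> G i \<inter> G j = {}) \<longrightarrow>
            (\<exists>E D. is_code n M E D \<and> constrained n \<beta> p M E))
       \<and> (\<forall>(k::nat) C. linear_code n k C \<and> S_good n \<beta> p C \<longrightarrow>
            (\<exists>(M::nat) E D. is_code n M E D \<and> constrained n \<beta> p M E \<and>
               log 2 (real M) / real n = real (n - k) / real n))"
proof (intro conjI allI impI)
  fix M :: nat and G :: "nat \<Rightarrow> (nat \<Rightarrow> bit) set"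
  assume "0 < M \<and> (\<forall>i\<in>{1..M}. S_good n \<beta> p (G i)) \<and>
    (\<forall>i\<in>{1..M}. \<forall>j\<in>{1..M}. i \<noteq> j \<longrightarrow> G i \<inter> G j = {})"
  then show "\<exists>E D. is_code n M E D \<and> constrained n \<beta> p M E"
    by (intro constrained_code_if_disjoint_S_good) auto
next
  fix k :: nat and C
  assume "linear_code n k C \<and> S_good n \<beta> p C"
  then obtain E D where "is_code n (2 ^ (n - k)) E D" "constrained n \<beta> p (2 ^ (n - k)) E"
    using constrained_code_of_linear_code by blast
  moreover have "log 2 (real (2 ^ (n - k))) / real n = real (n - k) / real n"
    by (simp add: log_nat_power)
  ultimately show "\<exists>(M::nat) E D. is_code n M E D \<and> constrained n \<beta> p M E \<and>
      log 2 (real M) / real n = real (n - k) / real n"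
    by blast
qed

end
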